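(* Let $X=\ell_2(\mathbb N)$ (complex), with unit vectors $e_k$, and let $(\lambda_k)_{k\ge1}$ be real numbers with $0<\lambda_1<\lambda_2<\cdots$ and $\lambda_k\to\infty$. Define $Ax=\sum_{k\ge1}-\lambda_k\langle x,e_k\rangle e_k$ on $D(A)=\{x\in\ell_2:\sum_k-\lambda_k\langle x,e_k\rangle e_k\text{ converges in }\ell_2\}$, and let $B\in L(\mathbb C^m,X_{-1})$. Then the system $\dot x=Ax+Bu$ with inputs $u\in L^\infty(\mathbb R_+,\mathbb C^m)$ is ISS, and $$V(x)=-\operatorname{Re}\langle A^{-1}x,x\rangle=\sum_{k=1}^\infty\frac{1}{\lambda_k}|\langle x,e_k\rangle|^2$$ is a non-coercive ISS Lyapunov function for it.
   Context: $X_{-1}$ is the completion of $X$ with respect to $\|x\|_{X_{-1}}=\|(\beta I-A)^{-1}x\|_X$ for some $\beta$ in the resolvent set of $A$; $(T_{-1}(t))$ extends the semigroup $(T(t))$ generated by $A$ to $X_{-1}$. The mild solution is $\phi(t,x_0,u)=T(t)x_0+\int_0^tT_{-1}(t-s)Bu(s)ds$. ISS: there are $\beta\in\mathcal{KL}$, $\gamma\in\mathcal K$ with $\|\phi(t,x_0,u)\|\le\beta(\|x_0\|,t)+\gamma(\|u\|_\infty)$ for all $x_0,u,t\ge0$. $\dot V_u(x)=\limsup_{t\to+0}\frac1t(V(\phi(t,x,u))-V(x))$; a continuous $V:X\to\mathbb R_+$ is a non-coercive ISS Lyapunov function if there exist $\psi_2,\alpha\in\mathcal K_\infty$, $\sigma\in\mathcal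 K$ with $0<V(x)\le\psi_2(\|x\|)$ for $x\ne0$ and $\dot V_u(x)\le-\alpha(\|x\|)+\sigma(\|u\|_\infty)$ for all $x,u$. $\mathcal K$ = continuous strictly increasing $\gamma:\mathbb R_+\to\mathbb R_+$ with $\gamma(0)=0$; $\mathcal K_\infty$ = unbounded elements of $\mathcal K$; $\mathcal{KL}$ = $\beta:\mathbb R_+^2\to\mathbb R_+$ with $\beta(\cdot,t)\in\mathcal K$ and $\beta(r,\cdot)$ continuous strictly decreasing to $0$ for $r>0$. *)

theory Defs
  imports "HOL-Analysis.Analysis" "HOL-Probability.Essential_Supremum"
begin

definition l2 :: "(nat \<Rightarrow> complex) set" where
  "l2 = {x. summable (\<lambda>k. (cmod (x k))\<^sup>2)}"

definition l2norm :: "(nat \<Rightarrow> complex) \<Rightarrow> real" where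
  "l2norm x = sqrt (\<Sum>k. (cmod (x k))\<^sup>2)"

definition l2inner :: "(nat \<Rightarrow> complex) \<Rightarrow> (nat \<Rightarrow> complex) \<Rightarrow> complex" where
  "l2inner x y = (\<Sum>k. x k * cnj (y k))"

definition opA :: "(nat \<Rightarrow> real) \<Rightarrow> (nat \<Rightarrow> complex) \<Rightarrow> (nat \<Rightarrow> complex)" where
  "opA lam x = (\<lambda>k. - complex_of_real (lam k) * x k)"

definition domA :: "(nat \<Rightarrow> real) \<Rightarrow> (nat \<Rightarrow> complex) set" where
  "domA lam = {x \<in> l2. \<exists>y\<in>l2.
     (\<lambda>n. l2norm (\<lambda>k. (if k < n then - complex_of_real (lam k) * x k else 0) - y k))
       \<longlonglongrightarrow> 0}"

text \<open>Extrapolation space X_{-1}, the completion of X w.r.t. the norm ||A^{-1} x||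
  (beta = 0 lies in the resolvent set), realised as sequences with
  sum_k |x_k|^2 / lam_k^2 finite.\<close>

definition Xm1 :: "(nat \<Rightarrow> real) \<Rightarrow> (nat \<Rightarrow> complex) set" where
  "Xm1 lam = {x. summable (\<lambda>k. (cmod (x k))\<^sup>2 / (lam k)\<^sup>2)}"

text \<open>B in L(C^m, X_{-1}) is given by the images b j = B e_j in X_{-1};
  (B v)_k = sum_j v_j (b j)_k.\<close>

definition opB :: "('m::finite \<Rightarrow> nat \<Rightarrow> complex) \<Rightarrow> complex^'m \<Rightarrow> (nat \<Rightarrow> complex)" where
  "opB b v = (\<lambda>k. \<Sum>j\<in>UNIV. v $ j * b j k)"

definition Linf :: "(real \<Rightarrow> complex^'m::finite) set" where
  "Linf = {u. u \<in> borel_measurable (restrict_space lborel {0..}) \<and>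
              esssup (restrict_space lborel {0..}) (\<lambda>t. ereal (norm (u t))) < \<infinity>}"

definition linf_norm :: "(real \<Rightarrow> complex^'m::finite) \<Rightarrow> real" where
  "linf_norm u = real_of_ereal (esssup (restrict_space lborel {0..}) (\<lambda>t. ereal (norm (u t))))"

text \<open>Mild solution phi(t,x0,u) = T(t) x0 + int_0^t T_{-1}(t-s) B u(s) ds, written
  coordinatewise (the coordinate functionals are continuous on X_{-1}, and T(t), T_{-1}(t)
  act diagonally by exp(-lam_k t)).\<close>

definition phi :: "(nat \<Rightarrow> real) \<Rightarrow> ('m::finite \<Rightarrow> nat \<Rightarrow> complex) \<Rightarrow> real
                    \<Rightarrow> (nat \<Rightarrow> complex) \<Rightarrow> (real \<Rightarrow> complex^'m) \<Rightarrow> (nat \<Rightarrow> complex)" where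
  "phi lam b t x0 u = (\<lambda>k. complex_of_real (exp (- lam k * t)) * x0 k
      + (LINT s:{0..t}|lborel. complex_of_real (exp (- lam k * (t - s))) * opB b (u s) k))"

definition classK :: "(real \<Rightarrow> real) \<Rightarrow> bool" where
  "classK g \<longleftrightarrow> continuous_on {0..} g \<and> strict_mono_on {0..} g \<and> g 0 = 0"

definition classKinf :: "(real \<Rightarrow> real) \<Rightarrow> bool" where
  "classKinf g \<longleftrightarrow> classK g \<and> (\<forall>M. \<exists>r\<ge>0. g r > M)"

definition classKL :: "(real \<Rightarrow> real \<Rightarrow> real) \<Rightarrow> bool" where
  "classKL \<beta> \<longleftrightarrow> (\<forall>t\<ge>0. classK (\<lambda>r. \<beta> r t)) \<and>
     (\<forall>r>0. continuous_on {0..} (\<beta> r) \<and>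
            (\<forall>s t. 0 \<le> s \<longrightarrow> s < t \<longrightarrow> \<beta> r t < \<beta> r s) \<and>
            (\<beta> r \<longlongrightarrow> 0) at_top)"

definition ISS :: "(nat \<Rightarrow> real) \<Rightarrow> ('m::finite \<Rightarrow> nat \<Rightarrow> complex) \<Rightarrow> bool" where
  "ISS lam b \<longleftrightarrow> (\<exists>\<beta> \<gamma>. classKL \<beta> \<and> classK \<gamma> \<and>
     (\<forall>x0\<in>l2. \<forall>u\<in>Linf. \<forall>t\<ge>0.
        phi lam b t x0 u \<in> l2 \<and>
        l2norm (phi lam b t x0 u) \<le> \<beta> (l2norm x0) t + \<gamma> (linf_norm u)))"

definition Vdot :: "(nat \<Rightarrow> real) \<Rightarrow> ('m::finite \<Rightarrow> nat \<Rightarrow> complex) \<Rightarrow> ((nat \<Rightarrow> complex) \<Rightarrow> real)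
                    \<Rightarrow> (real \<Rightarrow> complex^'m) \<Rightarrow> (nat \<Rightarrow> complex) \<Rightarrow> ereal" where
  "Vdot lam b V u x = Limsup (at_right 0) (\<lambda>t. ereal ((V (phi lam b t x u) - V x) / t))"

definition ncISS_LF :: "(nat \<Rightarrow> real) \<Rightarrow> ('m::finite \<Rightarrow> nat \<Rightarrow> complex) \<Rightarrow> ((nat \<Rightarrow> complex) \<Rightarrow> real) \<Rightarrow> bool" where
  "ncISS_LF lam b V \<longleftrightarrow>
     (\<forall>x\<in>l2. 0 \<le> V x) \<and>
     (\<forall>x\<in>l2. \<forall>\<epsilon>>0. \<exists>\<delta>>0. \<forall>y\<in>l2. l2norm (\<lambda>k. y k - x k) < \<delta> \<longrightarrow> \<bar>V y - V x\<bar> < \<epsilon>) \<and>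
     (\<exists>\<psi>2 \<alpha> \<sigma>. classKinf \<psi>2 \<and> classKinf \<alpha> \<and> classK \<sigma> \<and>
        (\<forall>x\<in>l2. x \<noteq> (\<lambda>k. 0) \<longrightarrow> 0 < V x \<and> V x \<le> \<psi>2 (l2norm x)) \<and>
        (\<forall>x\<in>l2. \<forall>u\<in>(Linf :: (real \<Rightarrow> complex^'m) set).
            Vdot lam b V u x \<le> ereal (- \<alpha> (l2norm x) + \<sigma> (linf_norm u))))"

end

theory Submission
  imports Defs "HOL-Real_Asymp.Real_Asymp"
begin

text \<open>Everything is diagonal. \<open>A\<^sup>-\<^sup>1 x = (- x\<^sub>k / \<lambda>\<^sub>k)\<close>, so
  \<open>- Re \<langle>A\<^sup>-\<^sup>1 x, x\<rangle> = \<Sum> |x\<^sub>k|\<^sup>2 / \<lambda>\<^sub>k\<close>. The \<open>k\<close>-th mode of the mild solution is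
  \<open>exp (- \<lambda>\<^sub>k t) x\<^sub>k\<close> plus a convolution of modulus at most
  \<open>\<parallel>u\<parallel>\<^sub>\<infinity> c\<^sub>k (1 - exp (- \<lambda>\<^sub>k t)) / \<lambda>\<^sub>k\<close>, where \<open>c\<^sub>k = \<Sum>\<^sub>j |b\<^sub>j\<^sub>k|\<close>; the hypothesis
  \<open>B \<in> L(\<complex>\<^sup>m, X\<^sub>-\<^sub>1)\<close> says exactly that \<open>(c\<^sub>k / \<lambda>\<^sub>k)\<close> is square summable. Minkowski's
  inequality then gives ISS with decay rate \<open>\<lambda>\<^sub>1\<close>.

  For the Lyapunov inequality, the difference quotient of \<open>|\<phi>\<^sub>k(t)|\<^sup>2 / \<lambda>\<^sub>k\<close> is
  bounded by a majorant that is dominated, uniformly in \<open>t > 0\<close>, by a summable sequence and tends to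
  \<open>- 2 |x\<^sub>k|\<^sup>2 + 2 |x\<^sub>k| \<parallel>u\<parallel>\<^sub>\<infinity> c\<^sub>k / \<lambda>\<^sub>k\<close> as \<open>t \<rightarrow> 0\<close>. Tannery's theorem moves the
  limit through the sum, bounding the Dini derivative of \<open>V\<close> by
  \<open>- \<parallel>x\<parallel>\<^sup>2 + \<parallel>(c\<^sub>k / \<lambda>\<^sub>k)\<parallel>\<^sup>2 \<parallel>u\<parallel>\<^sub>\<infinity>\<^sup>2\<close>.\<close>

section \<open>Cauchy--Schwarz and Minkowski for square-summable real sequences\<close>

lemma L2_set_lessThan_le_sqrt_suminf:
  fixes f :: "nat \<Rightarrow> real"
  assumes "summable (\<lambda>k. (f k)\<^sup>2)"
  shows "L2_set f {..<n} \<le> sqrt (\<Sum>k. (f k)\<^sup>2)"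
  unfolding L2_set_def by (intro real_sqrt_le_mono sum_le_suminf assms) auto

lemma summable_abs_mult_if_summable_squares:
  fixes a b :: "nat \<Rightarrow> real"
  assumes "summable (\<lambda>k. (a k)\<^sup>2)" and "summable (\<lambda>k. (b k)\<^sup>2)"
  shows "summable (\<lambda>k. \<bar>a k\<bar> * \<bar>b k\<bar>)"
proof (rule summable_comparison_test'[OF summable_add[OF assms]])
  fix k
  have "2 * (\<bar>a k\<bar> * \<bar>b k\<bar>) \<le> (a k)\<^sup>2 + (b k)\<^sup>2"
    using sum_squares_bound[of "\<bar>a k\<bar>" "\<bar>b k\<bar>"] by (simp add: mult.assoc)
  moreover have "0 \<le> \<bar>a k\<bar> * \<bar>b k\<bar>"
    by simp
  ultimately show "norm (\<bar>a k\<bar> * \<bar>b k\<bar>) \<le> (a k)\<^sup>2 + (b k)\<^sup>2"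
    by (simp only: real_norm_def abs_mult abs_abs)
qed

lemma suminf_abs_mult_le:
  fixes a b :: "nat \<Rightarrow> real"
  assumes "summable (\<lambda>k. (a k)\<^sup>2)" and "summable (\<lambda>k. (b k)\<^sup>2)"
  shows "(\<Sum>k. \<bar>a k\<bar> * \<bar>b k\<bar>) \<le> sqrt (\<Sum>k. (a k)\<^sup>2) * sqrt (\<Sum>k. (b k)\<^sup>2)"
proof (rule suminf_le_const[OF summable_abs_mult_if_summable_squares[OF assms]])
  fix n
  have "(\<Sum>k<n. \<bar>a k\<bar> * \<bar>b k\<bar>) \<le> L2_set a {..<n} * L2_set b {..<n}"
    by (rule L2_set_mult_ineq)
  also have "\<dots> \<le> sqrt (\<Sum>k. (a k)\<^sup>2) * sqrt (\<Sum>k. (b k)\<^sup>2)"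
    by (intro mult_mono L2_set_lessThan_le_sqrt_suminf assms) (simp_all add: suminf_nonneg assms)
  finally show "(\<Sum>k<n. \<bar>a k\<bar> * \<bar>b k\<bar>) \<le> sqrt (\<Sum>k. (a k)\<^sup>2) * sqrt (\<Sum>k. (b k)\<^sup>2)" .
qed

lemma summable_square_add:
  fixes a b :: "nat \<Rightarrow> real"
  assumes "summable (\<lambda>k. (a k)\<^sup>2)" and "summable (\<lambda>k. (b k)\<^sup>2)"
  shows "summable (\<lambda>k. (a k + b k)\<^sup>2)"
proof (rule summable_comparison_test'[OF summable_add[OF summable_mult[OF assms(1)] summable_mult[OF assms(2)]]])
  fix k
  have "(a k + b k)\<^sup>2 \<le> 2 * (a k)\<^sup>2 + 2 * (b k)\<^sup>2"
    using sum_squares_bound[of "a k" "b k"] by (simp add: power2_sum)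
  then show "norm ((a k + b k)\<^sup>2) \<le> 2 * (a k)\<^sup>2 + 2 * (b k)\<^sup>2"
    by simp
qed

lemma sqrt_suminf_square_add_le:
  fixes a b :: "nat \<Rightarrow> real"
  assumes "summable (\<lambda>k. (a k)\<^sup>2)" and "summable (\<lambda>k. (b k)\<^sup>2)"
  shows "sqrt (\<Sum>k. (a k + b k)\<^sup>2) \<le> sqrt (\<Sum>k. (a k)\<^sup>2) + sqrt (\<Sum>k. (b k)\<^sup>2)"
proof (rule real_le_lsqrt)
  show "(\<Sum>k. (a k + b k)\<^sup>2) \<le> (sqrt (\<Sum>k. (a k)\<^sup>2) + sqrt (\<Sum>k. (b k)\<^sup>2))\<^sup>2"
  proof (rule suminf_le_const[OF summable_square_add[OF assms]])
    fix n
    have "(\<Sum>k<n. (a k + b k)\<^sup>2) = (L2_set (\<lambda>k. a k + b k) {..<n})\<^sup>2"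
      by (simp add: L2_set_def sum_nonneg)
    also have "\<dots> \<le> (L2_set a {..<n} + L2_set b {..<n})\<^sup>2"
      by (intro power_mono L2_set_triangle_ineq) simp
    also have "\<dots> \<le> (sqrt (\<Sum>k. (a k)\<^sup>2) + sqrt (\<Sum>k. (b k)\<^sup>2))\<^sup>2"
      by (intro power_mono add_mono L2_set_lessThan_le_sqrt_suminf assms) simp
    finally show "(\<Sum>k<n. (a k + b k)\<^sup>2) \<le> (sqrt (\<Sum>k. (a k)\<^sup>2) + sqrt (\<Sum>k. (b k)\<^sup>2))\<^sup>2" .
  qed
qed (simp add: suminf_nonneg assms)

lemma summable_square_sum:
  fixes f :: "'j \<Rightarrow> nat \<Rightarrow> real"
  assumes "finite S" and "\<And>j. j \<in> S \<Longrightarrow> summable (\<lambda>k. (f j k)\<^sup>2)"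
  shows "summable (\<lambda>k. (\<Sum>j\<in>S. f j k)\<^sup>2)"
  using assms by (induction S rule: finite_induct) (simp_all add: summable_square_add)

lemma l2norm_power2:
  assumes "x \<in> l2"
  shows "(l2norm x)\<^sup>2 = (\<Sum>k. (cmod (x k))\<^sup>2)"
  using assms by (simp add: l2norm_def l2_def suminf_nonneg)

lemma l2norm_nonneg: "x \<in> l2 \<Longrightarrow> 0 \<le> l2norm x"
  by (simp add: l2norm_def l2_def suminf_nonneg)

lemma l2_diff:
  assumes "x \<in> l2" and "y \<in> l2"
  shows "(\<lambda>k. y k - x k) \<in> l2"
proof -
  have "summable (\<lambda>k. (cmod (y k) + cmod (x k))\<^sup>2)"
    using assms by (intro summable_square_add) (auto simp: l2_def)
  then show ?thesis
    unfolding l2_def mem_Collect_eq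
    by (rule summable_comparison_test') (auto intro!: power_mono norm_triangle_ineq4)
qed

lemma l2norm_tail_tendsto_zero:
  assumes "x \<in> l2"
  shows "(\<lambda>n. l2norm (\<lambda>k. if k < n then 0 else x k)) \<longlonglongrightarrow> 0"
proof -
  have xs: "summable (\<lambda>k. (cmod (x k))\<^sup>2)"
    using assms by (simp add: l2_def)
  have "(\<Sum>k. (cmod (if k < n then 0 else x k))\<^sup>2) = (\<Sum>i. (cmod (x (i + n)))\<^sup>2)" for n
  proof -
    have "(\<lambda>i. (cmod (x (i + n)))\<^sup>2) sums (\<Sum>i. (cmod (x (i + n)))\<^sup>2)"
      using summable_ignore_initial_segment[OF xs, of n] by (rule summable_sums)
    then have "(\<lambda>k. (cmod (if k < n then 0 else x k))\<^sup>2) sums (\<Sum>i. (cmod (x (i + n)))\<^sup>2)"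
      by (subst sums_zero_iff_shift[symmetric, of n]) simp_all
    then show ?thesis by (simp add: sums_iff)
  qed
  then show ?thesis
    unfolding l2norm_def
    using tendsto_real_sqrt[OF suminf_exist_split2[OF xs]] by simp
qed

lemma linf_norm_nonneg: "0 \<le> linf_norm u"
proof -
  let ?M = "restrict_space lborel {0::real..}"
  have "emeasure lborel {0::real..1} \<le> emeasure lborel {0::real..}"
    by (rule emeasure_mono) auto
  then have "emeasure ?M (space ?M) \<noteq> 0"
    by (auto simp: emeasure_restrict_space)
  then have "0 = esssup ?M (\<lambda>t. 0)"
    by (simp add: esssup_const zero_ereal_def)
  also have "\<dots> \<le> esssup ?M (\<lambda>t. ereal (norm (u t)))"
    by (intro esssup_mono) auto
  finally show ?thesis
    unfolding linf_norm_def by (simp add: real_of_ereal_pos)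
qed

lemma AE_norm_le_linf_norm:
  assumes "u \<in> Linf"
  shows "AE s in lborel. 0 \<le> s \<longrightarrow> norm (u s) \<le> linf_norm u"
proof -
  let ?S = "esssup (restrict_space lborel {0..}) (\<lambda>t. ereal (norm (u t)))"
  have "AE s in restrict_space lborel {0..}. ereal (norm (u s)) \<le> ?S"
    by (rule esssup_AE)
  then have "AE s in lborel. 0 \<le> s \<longrightarrow> ereal (norm (u s)) \<le> ?S"
    by (subst (asm) AE_restrict_space_iff) auto
  moreover have "?S < \<infinity>"
    using assms by (simp add: Linf_def)
  ultimately show ?thesis
    unfolding linf_norm_def by (elim eventually_mono) (cases ?S; auto)
qed

section \<open>Exponentially weighted convolution\<close>

lemma integral_exp_decay:
  fixes l t :: real
  assumes "0 < l" and "0 \<le> t"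
  shows "(LBINT s:{0..t}. exp (- l * (t - s))) = (1 - exp (- l * t)) / l"
proof -
  have "(LBINT s:{0..t}. exp (- l * (t - s))) = (LBINT s=ereal 0..ereal t. exp (- l * (t - s)))"
    by (rule interval_integral_Icc[OF assms(2), symmetric])
  also have "\<dots> = exp (- l * (t - t)) / l - exp (- l * (t - 0)) / l"
  proof (rule interval_integral_FTC_finite)
    show "continuous_on {min 0 t..max 0 t} (\<lambda>s. exp (- l * (t - s)))"
      by (intro continuous_intros)
    fix s
    show "((\<lambda>s. exp (- l * (t - s)) / l) has_vector_derivative exp (- l * (t - s)))
            (at s within {min 0 t..max 0 t})"
      unfolding has_real_derivative_iff_has_vector_derivative[symmetric]
      using assms by (auto intro!: derivative_eq_intros)
  qed
  also have "\<dots> = (1 - exp (- l * t)) / l"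
    by (simp add: diff_divide_distrib)
  finally show ?thesis .
qed

lemma norm_exp_convolution_le:
  fixes g :: "complex^'m::finite \<Rightarrow> complex"
  assumes u: "u \<in> Linf" and t: "0 \<le> t" and l: "0 < l" and c: "0 \<le> c"
    and g: "\<And>v. cmod (g v) \<le> norm v * c"
  shows "cmod (LINT s:{0..t}|lborel. complex_of_real (exp (- l * (t - s))) * g (u s))
           \<le> linf_norm u * c * ((1 - exp (- l * t)) / l)"
proof -
  let ?U = "linf_norm u"
  let ?k = "\<lambda>s. indicator {0..t} s * exp (- l * (t - s))"
  have "set_integrable lborel {0..t} (\<lambda>s. exp (- l * (t - s)))"
    by (intro borel_integrable_atLeastAtMost' continuous_intros)
  then have k_int: "integrable lborel ?k"
    by (simp add: set_integrable_def)
  have "cmod (LINT s:{0..t}|lborel. complex_of_real (exp (- l * (t - s))) * g (u s))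
      \<le> (LINT s|lborel. norm (indicator {0..t} s *\<^sub>R (complex_of_real (exp (- l * (t - s))) * g (u s))))"
    unfolding set_lebesgue_integral_def by (rule integral_norm_bound)
  also have "\<dots> \<le> (LINT s|lborel. ?k s * (?U * c))"
  proof (rule integral_mono_AE')
    show "integrable lborel (\<lambda>s. ?k s * (?U * c))"
      using k_int by simp
    show "AE s in lborel. 0 \<le> ?k s * (?U * c)"
      using c linf_norm_nonneg[of u] by auto
    show "AE s in lborel. norm (indicator {0..t} s *\<^sub>R (complex_of_real (exp (- l * (t - s))) * g (u s)))
        \<le> ?k s * (?U * c)"
      using AE_norm_le_linf_norm[OF u]
    proof (elim eventually_mono)
      fix s assume "0 \<le> s \<longrightarrow> norm (u s) \<le> ?U"
      then have "s \<in> {0..t} \<Longrightarrow> cmod (g (u s)) \<le> ?U * c"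
        using g[of "u s"] c by (meson atLeastAtMost_iff mult_right_mono order_trans)
      then show "norm (indicator {0..t} s *\<^sub>R (complex_of_real (exp (- l * (t - s))) * g (u s)))
          \<le> ?k s * (?U * c)"
        by (cases "s \<in> {0..t}") (simp_all add: norm_mult)
    qed
  qed
  also have "\<dots> = (LBINT s:{0..t}. exp (- l * (t - s))) * (?U * c)"
    by (simp add: set_lebesgue_integral_def)
  also have "\<dots> = ?U * c * ((1 - exp (- l * t)) / l)"
    using integral_exp_decay[OF l t] by simp
  finally show ?thesis .
qed

lemma classK_linear: "0 < c \<Longrightarrow> classK (\<lambda>r. c * r)"
  by (auto simp: classK_def strict_mono_on_def intro!: continuous_intros)

lemma classKinf_power2:
  fixes c :: real
  assumes "0 < c"
  shows "classKinf (\<lambda>r. c * r\<^sup>2)"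
  unfolding classKinf_def classK_def
proof (intro conjI allI)
  show "continuous_on {0..} (\<lambda>r. c * r\<^sup>2)"
    by (intro continuous_intros)
  show "strict_mono_on {0..} (\<lambda>r. c * r\<^sup>2)"
    using assms by (auto simp: strict_mono_on_def intro!: power_strict_mono)
  fix M
  have "M < \<bar>M\<bar> + c"
    using assms by linarith
  also have "\<dots> = c * (\<bar>M\<bar> / c + 1)"
    using assms by (simp add: field_simps)
  also have "\<dots> \<le> c * (\<bar>M\<bar> / c + 1)\<^sup>2"
    using assms self_le_power[of "\<bar>M\<bar> / c + 1" 2] by (intro mult_left_mono) auto
  finally show "\<exists>r\<ge>0. M < c * r\<^sup>2"
    using assms by (intro exI[of _ "\<bar>M\<bar> / c + 1"]) auto
qed simp

lemma classKL_exp_decay: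
  fixes \<mu> :: real
  assumes "0 < \<mu>"
  shows "classKL (\<lambda>r t. r * exp (- \<mu> * t))"
  unfolding classKL_def
proof (intro conjI allI impI)
  fix t :: real
  show "classK (\<lambda>r. r * exp (- \<mu> * t))"
    using classK_linear[of "exp (- \<mu> * t)"] by (simp add: mult.commute)
next
  fix r :: real assume r: "0 < r"
  show "continuous_on {0..} (\<lambda>t. r * exp (- \<mu> * t))"
    by (intro continuous_intros)
  show "((\<lambda>t. r * exp (- \<mu> * t)) \<longlongrightarrow> 0) at_top"
    using assms by real_asymp
  fix s t :: real
  assume "0 \<le> s" and "s < t"
  then show "r * exp (- \<mu> * t) < r * exp (- \<mu> * s)"
    using r assms by auto
qed

section \<open>Elementary estimates for one mode\<close>

lemma abs_power2_diff_le:
  fixes a c d :: real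
  assumes "0 \<le> a" and "0 \<le> c" and "\<bar>c - a\<bar> \<le> d"
  shows "\<bar>c\<^sup>2 - a\<^sup>2\<bar> \<le> d\<^sup>2 + 2 * d * a"
proof -
  have "c\<^sup>2 - a\<^sup>2 = (c - a) * (c + a)"
    by (simp add: power2_eq_square algebra_simps)
  then have "\<bar>c\<^sup>2 - a\<^sup>2\<bar> = \<bar>c - a\<bar> * (c + a)"
    using assms by (simp add: abs_mult)
  also have "\<dots> \<le> d * (d + 2 * a)"
    using assms by (intro mult_mono) auto
  finally show ?thesis
    by (simp add: power2_eq_square algebra_simps)
qed

definition dini_majorant :: "real \<Rightarrow> real \<Rightarrow> real \<Rightarrow> real \<Rightarrow> real" where
  "dini_majorant l a q t =
     (exp (- 2 * l * t) - 1) / (l * t) * a\<^sup>2 + 2 * a * q + q\<^sup>2 * (1 - exp (- l * t))"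

lemma abs_dini_majorant_le:
  assumes "0 < l" and "0 < t"
  shows "\<bar>dini_majorant l a q t\<bar> \<le> 2 * a\<^sup>2 + 2 * \<bar>a\<bar> * \<bar>q\<bar> + q\<^sup>2"
proof -
  have "1 + (- 2 * l * t) \<le> exp (- 2 * l * t)"
    by (rule exp_ge_add_one_self)
  moreover have "exp (- 2 * l * t) \<le> 1"
    using assms by simp
  ultimately have "\<bar>(exp (- 2 * l * t) - 1) / (l * t)\<bar> \<le> 2"
    using assms by (simp add: abs_divide divide_le_eq)
  then have "\<bar>(exp (- 2 * l * t) - 1) / (l * t) * a\<^sup>2\<bar> \<le> 2 * a\<^sup>2"
    unfolding abs_mult abs_power2 by (rule mult_right_mono) simp
  moreover have "\<bar>q\<^sup>2 * (1 - exp (- l * t))\<bar> \<le> q\<^sup>2"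
    using assms by (simp add: abs_mult mult_left_le)
  moreover have "\<bar>2 * a * q\<bar> = 2 * \<bar>a\<bar> * \<bar>q\<bar>"
    by (simp add: abs_mult)
  ultimately show ?thesis
    unfolding dini_majorant_def by arith
qed

lemma dini_majorant_tendsto:
  assumes "0 < l"
  shows "((\<lambda>t. dini_majorant l a q t) \<longlongrightarrow> 2 * a * q - 2 * a\<^sup>2) (at_right 0)"
proof -
  have "((\<lambda>t. (exp (- 2 * l * t) - 1) / (l * t)) \<longlongrightarrow> - 2) (at_right 0)"
    using assms by real_asymp
  then have "((\<lambda>t. dini_majorant l a q t) \<longlongrightarrow> - 2 * a\<^sup>2 + 2 * a * q + q\<^sup>2 * (1 - exp (- l * 0)))
      (at_right 0)"
    unfolding dini_majorant_def by (intro tendsto_intros)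
  then show ?thesis
    by simp
qed

lemma summable_dini_majorant:
  fixes l a q :: "nat \<Rightarrow> real"
  assumes l: "\<And>k. 0 < l k" and a: "summable (\<lambda>k. (a k)\<^sup>2)" and q: "summable (\<lambda>k. (q k)\<^sup>2)"
    and t: "0 < t"
  shows "summable (\<lambda>k. dini_majorant (l k) (a k) (q k) t)"
proof (rule summable_comparison_test')
  show "summable (\<lambda>k. 2 * (a k)\<^sup>2 + 2 * \<bar>a k\<bar> * \<bar>q k\<bar> + (q k)\<^sup>2)"
    unfolding mult.assoc[of 2]
    by (intro summable_add summable_mult summable_abs_mult_if_summable_squares a q)
qed (simp add: abs_dini_majorant_le[OF l t])

lemma tendsto_suminf_dini_majorant:
  fixes l a q :: "nat \<Rightarrow> real"
  assumes l: "\<And>k. 0 < l k" and a: "summable (\<lambda>k. (a k)\<^sup>2)" and q: "summable (\<lambda>k. (q k)\<^sup>2)"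
  shows "((\<lambda>t. \<Sum>k. dini_majorant (l k) (a k) (q k) t) \<longlongrightarrow> (\<Sum>k. 2 * a k * q k - 2 * (a k)\<^sup>2))
    (at_right 0)"
proof (rule tannerys_theorem[where M = "\<lambda>k. 2 * (a k)\<^sup>2 + 2 * \<bar>a k\<bar> * \<bar>q k\<bar> + (q k)\<^sup>2",
      THEN conjunct2, THEN conjunct2])
  show "((\<lambda>t. dini_majorant (l k) (a k) (q k) t) \<longlongrightarrow> 2 * a k * q k - 2 * (a k)\<^sup>2) (at_right 0)" for k
    by (rule dini_majorant_tendsto[OF l])
  show "\<forall>\<^sub>F (k, t) in at_top \<times>\<^sub>F at_right 0.
      norm (dini_majorant (l k) (a k) (q k) t) \<le> 2 * (a k)\<^sup>2 + 2 * \<bar>a k\<bar> * \<bar>q k\<bar> + (q k)\<^sup>2"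
    unfolding eventually_prod_filter
    by (intro exI[of _ "\<lambda>_. True"] exI[of _ "\<lambda>t. 0 < t"])
      (auto simp: eventually_at_right_less abs_dini_majorant_le[OF l])
  show "summable (\<lambda>k. 2 * (a k)\<^sup>2 + 2 * \<bar>a k\<bar> * \<bar>q k\<bar> + (q k)\<^sup>2)"
    unfolding mult.assoc[of 2]
    by (intro summable_add summable_mult summable_abs_mult_if_summable_squares a q)
qed simp

text \<open>The convolution part is controlled through \<open>(1 - exp (- l t)) / l \<le> t\<close>, which keeps
  the cross term and its square bounded after division by \<open>t\<close>.\<close>

lemma difference_quotient_le_dini_majorant:
  fixes l t a Q P :: real
  assumes l: "0 < l" and t: "0 < t" and a: "0 \<le> a" and Q: "0 \<le> Q" and P: "0 \<le> P"
    and P_le: "P \<le> exp (- l * t) * a + Q * ((1 - exp (- l * t)) / l)"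
  shows "(P\<^sup>2 / l - a\<^sup>2 / l) / t \<le> dini_majorant l a (Q / l) t"
proof -
  define e where "e = exp (- l * t)"
  define g where "g = (1 - e) / l"
  have e: "0 < e" "e \<le> 1"
    unfolding e_def using l t by auto
  have g: "0 \<le> g" "g \<le> t"
    unfolding g_def e_def using l t exp_ge_add_one_self[of "- l * t"]
    by (auto simp: divide_le_eq algebra_simps)
  have lt: "0 < l * t"
    using l t by simp
  have "P\<^sup>2 \<le> (e * a + Q * g)\<^sup>2"
    using P P_le unfolding e_def g_def by (intro power_mono) auto
  also have "\<dots> = e\<^sup>2 * a\<^sup>2 + 2 * e * a * (Q * g) + Q\<^sup>2 * g * g"
    by (simp add: power2_eq_square algebra_simps)
  also have "\<dots> \<le> e\<^sup>2 * a\<^sup>2 + 2 * a * (Q * t) + Q\<^sup>2 * g * t"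
    using e g a Q by (intro add_mono mult_mono mult_left_mono) (auto simp: mult_le_cancel_right1)
  finally have P2: "P\<^sup>2 - a\<^sup>2 \<le> (e\<^sup>2 - 1) * a\<^sup>2 + 2 * a * (Q * t) + Q\<^sup>2 * g * t"
    by (simp add: algebra_simps)
  have "(P\<^sup>2 / l - a\<^sup>2 / l) / t = (P\<^sup>2 - a\<^sup>2) / (l * t)"
    using l t by (simp add: field_simps)
  also have "\<dots> \<le> ((e\<^sup>2 - 1) * a\<^sup>2 + 2 * a * (Q * t) + Q\<^sup>2 * g * t) / (l * t)"
    using P2 lt by (rule divide_right_mono[OF _ less_imp_le])
  also have "\<dots> = dini_majorant l a (Q / l) t"
    unfolding dini_majorant_def g_def
    using l t by (simp add: e_def field_simps power2_eq_square flip: exp_add)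
  finally show ?thesis .
qed

section \<open>Diagonal generators with positive spectrum\<close>

definition lyap :: "(nat \<Rightarrow> real) \<Rightarrow> (nat \<Rightarrow> complex) \<Rightarrow> real" where
  "lyap lam x = (\<Sum>k. (cmod (x k))\<^sup>2 / lam k)"

locale positive_diagonal =
  fixes lam :: "nat \<Rightarrow> real"
  assumes lam_0_pos: "0 < lam 0" and mono_lam: "mono lam"
begin

lemma lam_0_le: "lam 0 \<le> lam k"
  using mono_lam by (simp add: monoD)

lemma lam_pos: "0 < lam k"
  using lam_0_pos lam_0_le by (rule order.strict_trans2)

lemma lam_neq_0: "lam k \<noteq> 0"
  using lam_pos[of k] by simp

lemma opA_eq_iff: "opA lam y = x \<longleftrightarrow> y = (\<lambda>k. - x k / complex_of_real (lam k))"
proof -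
  have "- complex_of_real (lam k) * y k = x k \<longleftrightarrow> y k = - x k / complex_of_real (lam k)" for k
    using lam_pos[of k] by (auto simp: field_simps minus_equation_iff)
  then show ?thesis
    unfolding opA_def fun_eq_iff by simp
qed

lemma opA_bijective: "x \<in> l2 \<Longrightarrow> \<exists>!y. y \<in> domA lam \<and> opA lam y = x"
proof -
  assume x: "x \<in> l2"
  let ?y = "\<lambda>k. - x k / complex_of_real (lam k)"
  have "?y \<in> l2"
    unfolding l2_def mem_Collect_eq
  proof (rule summable_comparison_test'[OF summable_divide[of _ "(lam 0)\<^sup>2"]])
    show "summable (\<lambda>k. (cmod (x k))\<^sup>2)"
      using x by (simp add: l2_def)
    fix k
    show "norm ((cmod (?y k))\<^sup>2) \<le> (cmod (x k))\<^sup>2 / (lam 0)\<^sup>2"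
      using lam_0_pos lam_0_le[of k] lam_pos[of k]
      by (simp add: norm_divide power_divide divide_left_mono power_mono)
  qed
  moreover have "(\<lambda>k. (if k < n then - complex_of_real (lam k) * ?y k else 0) - x k)
      = (\<lambda>k. - (if k < n then 0 else x k))" for n
    by (auto simp: fun_eq_iff lam_neq_0)
  then have "(\<lambda>n. l2norm (\<lambda>k. (if k < n then - complex_of_real (lam k) * ?y k else 0) - x k))
      \<longlonglongrightarrow> 0"
    using l2norm_tail_tendsto_zero[OF x] by (simp add: l2norm_def)
  ultimately have "?y \<in> domA lam"
    using x unfolding domA_def by blast
  then show ?thesis
    by (auto simp: opA_eq_iff)
qed

lemma summable_lyap:
  assumes "x \<in> l2"
  shows "summable (\<lambda>k. (cmod (x k))\<^sup>2 / lam k)"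
proof (rule summable_comparison_test'[OF summable_divide[of _ "lam 0"]])
  show "summable (\<lambda>k. (cmod (x k))\<^sup>2)"
    using assms by (simp add: l2_def)
  fix k
  show "norm ((cmod (x k))\<^sup>2 / lam k) \<le> (cmod (x k))\<^sup>2 / lam 0"
    using lam_0_pos lam_0_le[of k] lam_pos[of k] by (simp add: divide_left_mono)
qed

lemma lyap_nonneg: "x \<in> l2 \<Longrightarrow> 0 \<le> lyap lam x"
  unfolding lyap_def by (intro suminf_nonneg summable_lyap divide_nonneg_pos lam_pos) simp_all

lemma lyap_pos:
  assumes "x \<in> l2" and "x \<noteq> (\<lambda>k. 0)"
  shows "0 < lyap lam x"
proof -
  obtain i where "x i \<noteq> 0"
    using assms(2) by auto
  then show ?thesis
    unfolding lyap_def using lam_pos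
    by (intro suminf_pos2[OF summable_lyap[OF assms(1)], of i]) (auto intro!: divide_nonneg_pos)
qed

lemma lyap_le:
  assumes "x \<in> l2"
  shows "lyap lam x \<le> (l2norm x)\<^sup>2 / lam 0"
proof -
  have xs: "summable (\<lambda>k. (cmod (x k))\<^sup>2)"
    using assms by (simp add: l2_def)
  have "lyap lam x \<le> (\<Sum>k. (cmod (x k))\<^sup>2 / lam 0)"
    unfolding lyap_def
    using lam_0_pos lam_0_le lam_pos
    by (intro suminf_le summable_lyap assms summable_divide xs) (simp add: divide_left_mono)
  also have "\<dots> = (l2norm x)\<^sup>2 / lam 0"
    using suminf_divide[OF xs] l2norm_power2[OF assms] lam_0_pos by simp
  finally show ?thesis .
qed

lemma abs_lyap_diff_le:
  assumes x: "x \<in> l2" and y: "y \<in> l2"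
  defines "D \<equiv> l2norm (\<lambda>k. y k - x k)"
  shows "\<bar>lyap lam y - lyap lam x\<bar> \<le> (D\<^sup>2 + 2 * D * l2norm x) / lam 0"
proof -
  define d where "d k = cmod (y k - x k)" for k
  define a where "a k = cmod (x k)" for k
  have ds: "summable (\<lambda>k. (d k)\<^sup>2)"
    using l2_diff[OF x y] by (simp add: l2_def d_def)
  have xs: "summable (\<lambda>k. (a k)\<^sup>2)"
    using x by (simp add: l2_def a_def)
  have termwise: "\<bar>(cmod (y k))\<^sup>2 / lam k - (cmod (x k))\<^sup>2 / lam k\<bar>
      \<le> ((d k)\<^sup>2 + 2 * (\<bar>d k\<bar> * \<bar>a k\<bar>)) / lam 0" for k
  proof -
    have "\<bar>(cmod (y k))\<^sup>2 - (a k)\<^sup>2\<bar> \<le> (d k)\<^sup>2 + 2 * d k * a k"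
      unfolding d_def a_def by (rule abs_power2_diff_le) (auto simp: norm_triangle_ineq3)
    then have "\<bar>(cmod (y k))\<^sup>2 - (a k)\<^sup>2\<bar> / lam k \<le> ((d k)\<^sup>2 + 2 * d k * a k) / lam 0"
      using lam_0_le[of k] lam_0_pos by (intro frac_le) (auto simp: d_def a_def)
    then show ?thesis
      using lam_pos[of k] by (simp add: a_def d_def abs_divide mult.assoc flip: diff_divide_distrib)
  qed
  have majorant_s: "summable (\<lambda>k. ((d k)\<^sup>2 + 2 * (\<bar>d k\<bar> * \<bar>a k\<bar>)) / lam 0)"
    by (intro summable_divide summable_add summable_mult ds summable_abs_mult_if_summable_squares xs)
  have abs_s: "summable (\<lambda>k. \<bar>(cmod (y k))\<^sup>2 / lam k - (cmod (x k))\<^sup>2 / lam k\<bar>)"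
    by (rule summable_rabs_comparison_test[OF _ majorant_s]) (use termwise in blast)
  have "\<bar>lyap lam y - lyap lam x\<bar> = \<bar>\<Sum>k. (cmod (y k))\<^sup>2 / lam k - (cmod (x k))\<^sup>2 / lam k\<bar>"
    unfolding lyap_def by (simp add: suminf_diff summable_lyap x y)
  also have "\<dots> \<le> (\<Sum>k. \<bar>(cmod (y k))\<^sup>2 / lam k - (cmod (x k))\<^sup>2 / lam k\<bar>)"
    by (rule summable_rabs[OF abs_s])
  also have "\<dots> \<le> (\<Sum>k. ((d k)\<^sup>2 + 2 * (\<bar>d k\<bar> * \<bar>a k\<bar>)) / lam 0)"
    by (rule suminf_le[OF termwise abs_s majorant_s])
  also have "\<dots> = ((\<Sum>k. (d k)\<^sup>2) + 2 * (\<Sum>k. \<bar>d k\<bar> * \<bar>a k\<bar>)) / lam 0"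
    by (intro sums_unique[symmetric] sums_divide sums_add sums_mult summable_sums ds
        summable_abs_mult_if_summable_squares[OF ds xs])
  also have "\<dots> \<le> (D\<^sup>2 + 2 * D * l2norm x) / lam 0"
    using suminf_abs_mult_le[OF ds xs] l2norm_power2[OF l2_diff[OF x y]] lam_0_pos
    unfolding D_def l2norm_def d_def a_def
    by (intro divide_right_mono add_left_mono) (simp_all add: suminf_nonneg ds)
  finally show ?thesis .
qed

lemma lyap_continuous:
  assumes x: "x \<in> l2" and \<epsilon>: "0 < \<epsilon>"
  shows "\<exists>\<delta>>0. \<forall>y\<in>l2. l2norm (\<lambda>k. y k - x k) < \<delta> \<longrightarrow> \<bar>lyap lam y - lyap lam x\<bar> < \<epsilon>"
proof -
  let ?h = "\<lambda>D. (D\<^sup>2 + 2 * D * l2norm x) / lam 0"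
  have "isCont ?h 0"
    by (auto intro!: continuous_intros simp: lam_neq_0)
  then obtain \<delta> where "0 < \<delta>" and \<delta>: "\<And>D. dist D 0 < \<delta> \<Longrightarrow> dist (?h D) (?h 0) < \<epsilon>"
    using \<epsilon> unfolding continuous_at_eps_delta by blast
  have "\<bar>lyap lam y - lyap lam x\<bar> < \<epsilon>" if y: "y \<in> l2" and "l2norm (\<lambda>k. y k - x k) < \<delta>" for y
  proof -
    let ?D = "l2norm (\<lambda>k. y k - x k)"
    have "\<bar>lyap lam y - lyap lam x\<bar> \<le> ?h ?D"
      by (rule abs_lyap_diff_le[OF x y])
    also have "\<dots> \<le> dist (?h ?D) (?h 0)"
      using abs_ge_self[of "?h ?D"] by (simp add: dist_real_def)
    also have "\<dots> < \<epsilon>"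
      using \<delta>[of ?D] that l2norm_nonneg[OF l2_diff[OF x y]] by (simp add: dist_real_def)
    finally show ?thesis .
  qed
  with \<open>0 < \<delta>\<close> show ?thesis
    by blast
qed

lemma Re_l2inner_opA:
  assumes "x \<in> l2" and "opA lam y = x"
  shows "- Re (l2inner y x) = lyap lam x"
proof -
  have "y k * cnj (x k) = - complex_of_real ((cmod (x k))\<^sup>2 / lam k)" for k
  proof -
    have "y k * cnj (x k) = - (x k * cnj (x k)) / complex_of_real (lam k)"
      using assms(2) by (simp add: opA_eq_iff)
    then show ?thesis
      by (simp flip: complex_norm_square)
  qed
  moreover have "(\<lambda>k. - complex_of_real ((cmod (x k))\<^sup>2 / lam k)) sums - complex_of_real (lyap lam x)"
    unfolding lyap_def by (intro sums_minus sums_of_real summable_sums summable_lyap assms(1))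
  ultimately show ?thesis
    unfolding l2inner_def by (simp add: sums_iff)
qed

end


section \<open>The diagonal control system\<close>

definition coeff_norm :: "('m::finite \<Rightarrow> nat \<Rightarrow> complex) \<Rightarrow> nat \<Rightarrow> real" where
  "coeff_norm b k = (\<Sum>j\<in>UNIV. cmod (b j k))"

lemma coeff_norm_nonneg: "0 \<le> coeff_norm b k"
  unfolding coeff_norm_def by (simp add: sum_nonneg)

lemma norm_opB_le: "cmod (opB b v k) \<le> norm v * coeff_norm b k"
proof -
  have "cmod (opB b v k) \<le> (\<Sum>j\<in>UNIV. cmod (v $ j * b j k))"
    unfolding opB_def by (rule norm_sum)
  also have "\<dots> \<le> (\<Sum>j\<in>UNIV. norm v * cmod (b j k))"
    by (intro sum_mono) (auto simp: norm_mult intro!: mult_right_mono Finite_Cartesian_Product.norm_nth_le)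
  also have "\<dots> = norm v * coeff_norm b k"
    by (simp add: coeff_norm_def sum_distrib_left)
  finally show ?thesis .
qed

locale diagonal_system = positive_diagonal lam for lam :: "nat \<Rightarrow> real" +
  fixes b :: "'m::finite \<Rightarrow> nat \<Rightarrow> complex"
  assumes b_Xm1: "\<And>j. b j \<in> Xm1 lam"
begin

definition input_gain :: real where
  "input_gain = (\<Sum>k. (coeff_norm b k / lam k)\<^sup>2)"

lemma summable_coeff_norm: "summable (\<lambda>k. (coeff_norm b k / lam k)\<^sup>2)"
proof -
  have "summable (\<lambda>k. (\<Sum>j\<in>UNIV. cmod (b j k) / lam k)\<^sup>2)"
    using b_Xm1 by (intro summable_square_sum) (simp_all add: Xm1_def power_divide)
  then show ?thesis
    by (simp add: coeff_norm_def sum_divide_distrib)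
qed

lemma input_gain_nonneg: "0 \<le> input_gain"
  unfolding input_gain_def by (intro suminf_nonneg summable_coeff_norm) simp

lemma norm_phi_le:
  assumes "u \<in> Linf" and "0 \<le> t"
  shows "cmod (phi lam b t x u k)
    \<le> exp (- lam k * t) * cmod (x k) + linf_norm u * coeff_norm b k * ((1 - exp (- lam k * t)) / lam k)"
proof -
  have convolution_le: "cmod (LINT s:{0..t}|lborel. complex_of_real (exp (- lam k * (t - s))) * opB b (u s) k)
      \<le> linf_norm u * coeff_norm b k * ((1 - exp (- lam k * t)) / lam k)"
    by (rule norm_exp_convolution_le[OF assms lam_pos coeff_norm_nonneg norm_opB_le])
  show ?thesis
    unfolding phi_def
    by (rule order_trans[OF norm_triangle_ineq]) (use convolution_le in \<open>simp add: norm_mult\<close>)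
qed

lemma phi_in_l2_and_l2norm_le:
  assumes x: "x \<in> l2" and u: "u \<in> Linf" and t: "0 \<le> t"
  shows "phi lam b t x u \<in> l2"
    and "l2norm (phi lam b t x u) \<le> exp (- lam 0 * t) * l2norm x + sqrt input_gain * linf_norm u"
proof -
  let ?U = "linf_norm u"
  define p where "p k = exp (- lam 0 * t) * cmod (x k)" for k
  define q where "q k = ?U * (coeff_norm b k / lam k)" for k
  have xs: "summable (\<lambda>k. (cmod (x k))\<^sup>2)"
    using x by (simp add: l2_def)
  have ps: "summable (\<lambda>k. (p k)\<^sup>2)"
    unfolding p_def power_mult_distrib by (intro summable_mult xs)
  have qs: "summable (\<lambda>k. (q k)\<^sup>2)"
    unfolding q_def power_mult_distrib by (intro summable_mult summable_coeff_norm)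
  have phi_le: "cmod (phi lam b t x u k) \<le> p k + q k" for k
  proof -
    have "exp (- lam k * t) * cmod (x k) \<le> p k"
      unfolding p_def using lam_0_le[of k] t by (intro mult_right_mono) (auto intro: mult_right_mono)
    moreover have "(1 - exp (- lam k * t)) / lam k \<le> 1 / lam k"
      using lam_pos[of k] by (simp add: divide_right_mono)
    then have "?U * coeff_norm b k * ((1 - exp (- lam k * t)) / lam k) \<le> q k"
      unfolding q_def using mult_left_mono[OF _ mult_nonneg_nonneg[OF linf_norm_nonneg coeff_norm_nonneg]]
      by fastforce
    ultimately show ?thesis
      using norm_phi_le[OF u t, of x k] by linarith
  qed
  have phi_s: "summable (\<lambda>k. (cmod (phi lam b t x u k))\<^sup>2)"
    by (rule summable_comparison_test'[OF summable_square_add[OF ps qs]])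
      (simp add: power_mono phi_le)
  then show "phi lam b t x u \<in> l2"
    by (simp add: l2_def)
  have "l2norm (phi lam b t x u) \<le> sqrt (\<Sum>k. (p k + q k)\<^sup>2)"
    unfolding l2norm_def
    by (intro real_sqrt_le_mono suminf_le phi_s summable_square_add ps qs power_mono phi_le) simp
  also have "\<dots> \<le> sqrt (\<Sum>k. (p k)\<^sup>2) + sqrt (\<Sum>k. (q k)\<^sup>2)"
    by (rule sqrt_suminf_square_add_le[OF ps qs])
  also have "sqrt (\<Sum>k. (p k)\<^sup>2) = exp (- lam 0 * t) * l2norm x"
    unfolding p_def power_mult_distrib l2norm_def suminf_mult[OF xs] by (simp add: real_sqrt_mult)
  also have "sqrt (\<Sum>k. (q k)\<^sup>2) = sqrt input_gain * ?U"
    unfolding q_def power_mult_distrib input_gain_def suminf_mult[OF summable_coeff_norm]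
    using linf_norm_nonneg[of u] by (simp add: real_sqrt_mult)
  finally show "l2norm (phi lam b t x u) \<le> exp (- lam 0 * t) * l2norm x + sqrt input_gain * ?U" .
qed

lemma ISS: "ISS lam b"
  unfolding ISS_def
proof (intro exI conjI ballI allI impI)
  show "classKL (\<lambda>r t. r * exp (- lam 0 * t))"
    by (rule classKL_exp_decay[OF lam_0_pos])
  show "classK (\<lambda>r. (sqrt input_gain + 1) * r)"
    by (rule classK_linear) (simp add: add_nonneg_pos input_gain_nonneg)
  fix x and u :: "real \<Rightarrow> complex^'m" and t :: real
  assume x: "x \<in> l2" and u: "u \<in> Linf" and t: "0 \<le> t"
  show "phi lam b t x u \<in> l2"
    by (rule phi_in_l2_and_l2norm_le(1)[OF x u t])
  have "sqrt input_gain * linf_norm u \<le> (sqrt input_gain + 1) * linf_norm u"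
    using linf_norm_nonneg[of u] by (simp add: algebra_simps)
  then show "l2norm (phi lam b t x u) \<le> l2norm x * exp (- lam 0 * t) + (sqrt input_gain + 1) * linf_norm u"
    using phi_in_l2_and_l2norm_le(2)[OF x u t] by (simp add: mult.commute)
qed

lemma lyap_difference_quotient_le:
  assumes x: "x \<in> l2" and u: "u \<in> Linf" and t: "0 < t"
    and summable: "summable (\<lambda>k. dini_majorant (lam k) (cmod (x k)) (linf_norm u * coeff_norm b k / lam k) t)"
  shows "(lyap lam (phi lam b t x u) - lyap lam x) / t
    \<le> (\<Sum>k. dini_majorant (lam k) (cmod (x k)) (linf_norm u * coeff_norm b k / lam k) t)"
proof -
  let ?f = "\<lambda>k. (cmod (phi lam b t x u k))\<^sup>2 / lam k"
  let ?g = "\<lambda>k. (cmod (x k))\<^sup>2 / lam k"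
  have fs: "summable ?f"
    using phi_in_l2_and_l2norm_le(1)[OF x u] t by (intro summable_lyap) simp
  have gs: "summable ?g"
    by (rule summable_lyap[OF x])
  have "(lyap lam (phi lam b t x u) - lyap lam x) / t = (\<Sum>k. (?f k - ?g k) / t)"
    unfolding lyap_def by (simp add: suminf_diff[OF fs gs] suminf_divide[OF summable_diff[OF fs gs]])
  also have "\<dots> \<le> (\<Sum>k. dini_majorant (lam k) (cmod (x k)) (linf_norm u * coeff_norm b k / lam k) t)"
  proof (rule suminf_le[OF _ summable_divide[OF summable_diff[OF fs gs]] summable])
    fix k
    show "(?f k - ?g k) / t \<le> dini_majorant (lam k) (cmod (x k)) (linf_norm u * coeff_norm b k / lam k) t"
      using difference_quotient_le_dini_majorant[OF lam_pos t norm_ge_zero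
          mult_nonneg_nonneg[OF linf_norm_nonneg coeff_norm_nonneg] norm_ge_zero norm_phi_le[OF u]] t
      by simp
  qed
  finally show ?thesis .
qed

lemma Vdot_lyap_le:
  fixes u :: "real \<Rightarrow> complex^'m"
  assumes x: "x \<in> l2" and u: "u \<in> Linf"
  shows "Vdot lam b (lyap lam) u x \<le> ereal (input_gain * (linf_norm u)\<^sup>2 - (l2norm x)\<^sup>2)"
proof -
  define a where "a k = cmod (x k)" for k
  define q where "q k = linf_norm u * (coeff_norm b k / lam k)" for k
  have as: "summable (\<lambda>k. (a k)\<^sup>2)"
    using x by (simp add: l2_def a_def)
  have qs: "summable (\<lambda>k. (q k)\<^sup>2)"
    unfolding q_def power_mult_distrib by (rule summable_mult[OF summable_coeff_norm])
  have "Vdot lam b (lyap lam) u x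
      \<le> Limsup (at_right 0) (\<lambda>t. ereal (\<Sum>k. dini_majorant (lam k) (a k) (q k) t))"
    unfolding Vdot_def
  proof (intro Limsup_mono eventually_mono[OF eventually_at_right_less])
    fix t :: real
    assume t: "0 < t"
    show "ereal ((lyap lam (phi lam b t x u) - lyap lam x) / t)
        \<le> ereal (\<Sum>k. dini_majorant (lam k) (a k) (q k) t)"
      using lyap_difference_quotient_le[OF x u t] summable_dini_majorant[OF lam_pos as qs t]
      by (simp add: a_def q_def)
  qed
  also have "\<dots> = ereal (\<Sum>k. 2 * a k * q k - 2 * (a k)\<^sup>2)"
    by (intro lim_imp_Limsup tendsto_ereal tendsto_suminf_dini_majorant lam_pos as qs) simp
  also have "(\<Sum>k. 2 * a k * q k - 2 * (a k)\<^sup>2) \<le> (\<Sum>k. (q k)\<^sup>2 - (a k)\<^sup>2)"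
  proof (intro suminf_le summable_diff summable_mult as qs)
    show "summable (\<lambda>k. 2 * a k * q k)"
      using summable_mult[OF summable_abs_mult_if_summable_squares[OF as qs], of 2]
      by (simp add: a_def q_def abs_mult mult.assoc abs_of_pos lam_pos linf_norm_nonneg coeff_norm_nonneg)
  qed (use sum_squares_bound in auto)
  also have "\<dots> = (\<Sum>k. (q k)\<^sup>2) - (\<Sum>k. (a k)\<^sup>2)"
    by (rule suminf_diff[OF qs as, symmetric])
  also have "\<dots> = input_gain * (linf_norm u)\<^sup>2 - (l2norm x)\<^sup>2"
    unfolding q_def power_mult_distrib input_gain_def suminf_mult[OF summable_coeff_norm]
    by (simp add: a_def l2norm_power2[OF x])
  finally show ?thesis
    by simp
qed

lemma ncISS_LF_lyap: "ncISS_LF lam b (lyap lam)"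
  unfolding ncISS_LF_def
proof (intro conjI ballI allI impI)
  show "\<exists>\<psi>2 \<alpha> \<sigma>. classKinf \<psi>2 \<and> classKinf \<alpha> \<and> classK \<sigma> \<and>
      (\<forall>x\<in>l2. x \<noteq> (\<lambda>k. 0) \<longrightarrow> 0 < lyap lam x \<and> lyap lam x \<le> \<psi>2 (l2norm x)) \<and>
      (\<forall>x\<in>l2. \<forall>u\<in>(Linf :: (real \<Rightarrow> complex^'m) set).
          Vdot lam b (lyap lam) u x \<le> ereal (- \<alpha> (l2norm x) + \<sigma> (linf_norm u)))"
  proof (intro exI conjI ballI impI)
    show "classKinf (\<lambda>r. 1 / lam 0 * r\<^sup>2)"
      by (rule classKinf_power2) (simp add: lam_0_pos)
    show "classKinf (\<lambda>r. 1 * r\<^sup>2)"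
      by (rule classKinf_power2) simp
    show "classK (\<lambda>r. (input_gain + 1) * r\<^sup>2)"
      using classKinf_power2[of "input_gain + 1"] input_gain_nonneg by (simp add: classKinf_def)
  next
    fix x assume "x \<in> l2" and "x \<noteq> (\<lambda>k. 0)"
    then show "0 < lyap lam x" and "lyap lam x \<le> 1 / lam 0 * (l2norm x)\<^sup>2"
      using lyap_pos lyap_le by simp_all
  next
    fix x and u :: "real \<Rightarrow> complex^'m"
    assume "x \<in> l2" and "u \<in> Linf"
    from Vdot_lyap_le[OF this]
    show "Vdot lam b (lyap lam) u x \<le> ereal (- (1 * (l2norm x)\<^sup>2) + (input_gain + 1) * (linf_norm u)\<^sup>2)"
      by (rule order_trans) (simp add: algebra_simps)
  qed
qed (use lyap_nonneg lyap_continuous in auto)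

end

theorem mainTheorem17:
  fixes lam :: "nat \<Rightarrow> real"
    and b :: "'m::finite \<Rightarrow> nat \<Rightarrow> complex"
  assumes "0 < lam 0"
    and "strict_mono lam"
    and "filterlim lam at_top sequentially"
    and "\<forall>j. b j \<in> Xm1 lam"
  shows "ISS lam b
    \<and> (\<forall>x\<in>l2. \<exists>!y. y \<in> domA lam \<and> opA lam y = x)
    \<and> (\<forall>x\<in>l2. \<forall>y. y \<in> domA lam \<and> opA lam y = x \<longrightarrow>
          - Re (l2inner y x) = (\<Sum>k. (cmod (x k))\<^sup>2 / lam k))
    \<and> ncISS_LF lam b (\<lambda>x. \<Sum>k. (cmod (x k))\<^sup>2 / lam k)"
proof -
  interpret diagonal_system lam b
    using assms by unfold_locales (simp_all add: strict_mono_mono)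
  show ?thesis
    using ISS opA_bijective Re_l2inner_opA ncISS_LF_lyap unfolding lyap_def[abs_def] by blast
qed

end
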